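(* Let $A\in\mathbb{R}^{2\times 2}$ and $C\in\mathbb{R}^{1\times 2}$, with $(A,C)$ an observable pair and all eigenvalues of $A$ nonzero. (i) If there is no positive integer $h$ such that $A$ has two distinct eigenvalues $\lambda_1\neq\lambda_2$ with $\lambda_1^h=\lambda_2^h$, then for any two distinct nonnegative integers $t_1,t_2$ the matrix with rows $CA^{t_1},CA^{t_2}$ has rank $2$. (ii) If $A$ has two distinct eigenvalues $\lambda_1\neq\lambda_2$ with $\lambda_1^h=\lambda_2^h$ for some positive integer $h$, let $\bar h$ be the smallest such positive integer. Then for any $t\in\{0,1,2,\ldots\}$, any positive integer $T$, and any set of $N_s$ distinct integers $t_1,\ldots,t_{N_s}$ in $[t,t+T-1]$ with $N_s\geq 1+T/\bar h$, the matrix with rows $CA^{t_1},\ldots,CA^{t_{N_s}}$ has rank $2$.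
   Context: Setting: discrete-time single-output system $x(t+1)=Ax(t)+Bu(t)$, $y(t)=Cx(t)+Du(t)$ with output measured at selected time instances; the matrix with rows $CA^{t_i}$ is the sample-based observability matrix and rank $n$ means sample-based observability. $(A,C)$ observable means the matrix with rows $C,CA$ has rank $2$. *)

theory Defs
  imports "HOL-Analysis.Analysis"
begin

primrec matpow :: "'a::semiring_1^'n^'n \<Rightarrow> nat \<Rightarrow> 'a^'n^'n" where
  "matpow A 0 = mat 1"
| "matpow A (Suc k) = matpow A k ** A"

definition cmat :: "real^'n^'m \<Rightarrow> complex^'n^'m" where
  "cmat A = (\<chi> i j. complex_of_real (A $ i $ j))"

definition is_eigenvalue :: "real^'n^'n \<Rightarrow> complex \<Rightarrow> bool" where
  "is_eigenvalue A l \<longleftrightarrow> (\<exists>v::complex^'n. v \<noteq> 0 \<and> cmat A *v v = l *s v)"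

definition observable2 :: "real^2^2 \<Rightarrow> real^2 \<Rightarrow> bool" where
  "observable2 A C \<longleftrightarrow> rank (\<chi> i::2. if i = 1 then C else C v* A) = 2"

text \<open>Rank of the sample-based observability matrix with rows C A^t, t \<in> S
  (row rank = dimension of the span of the rows).\<close>
definition sample_obs_rank :: "real^'n^'n \<Rightarrow> real^'n \<Rightarrow> nat set \<Rightarrow> nat" where
  "sample_obs_rank A C S = dim (span ((\<lambda>t. C v* matpow A t) ` S))"

end

theory Submission
  imports Defs
begin

(* By Cayley-Hamilton, A^(n+1) = U (n+1) A - det A U n I, where U is the Lucas sequence
   U 0 = 0, U 1 = 1, U (n+2) = tr A U (n+1) - det A U n of the characteristic polynomial.
   Hence det [C A^t1; C A^t2] = U (t2 - t1) det [C; C A] (det A)^t1, and since (A, C) is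
   observable and A invertible, the two rows are independent iff U (t2 - t1) \<noteq> 0.
   Over the complex numbers, U d (l1 - l2) = l1^d - l2^d for the eigenvalues l1, l2, and
   U d = d l^(d-1) for a double eigenvalue l \<noteq> 0; so for d > 0, U d = 0 exactly when
   l1 \<noteq> l2 and l1^d = l2^d, i.e. exactly when hbar divides d. Finally, sample times whose
   pairwise differences are all multiples of hbar fit at most 1 + (T - 1) / hbar of them
   into a window of length T. *)

fun lucas_seq :: "'a::comm_ring_1 \<Rightarrow> 'a \<Rightarrow> nat \<Rightarrow> 'a" where
  "lucas_seq P Q 0 = 0"
| "lucas_seq P Q (Suc 0) = 1"
| "lucas_seq P Q (Suc (Suc n)) = P * lucas_seq P Q (Suc n) - Q * lucas_seq P Q n"

lemma of_real_lucas_seq: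
  "of_real (lucas_seq P Q n) = lucas_seq (of_real P) (of_real Q) n"
  by (induction P Q n rule: lucas_seq.induct) simp_all

lemma lucas_seq_roots_mult_diff:
  assumes "P = u + v" "Q = u * v"
  shows "lucas_seq P Q n * (u - v) = u ^ n - v ^ n"
proof (induction n rule: induct_nat_012)
  case (ge2 n)
  have "lucas_seq P Q (Suc (Suc n)) * (u - v)
      = P * (lucas_seq P Q (Suc n) * (u - v)) - Q * (lucas_seq P Q n * (u - v))"
    by (simp add: algebra_simps)
  also have "\<dots> = (u + v) * (u ^ Suc n - v ^ Suc n) - u * v * (u ^ n - v ^ n)"
    using ge2 assms by simp
  also have "\<dots> = u ^ Suc (Suc n) - v ^ Suc (Suc n)"
    by (simp add: algebra_simps)
  finally show ?case .
qed simp_all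

lemma lucas_seq_double_root:
  assumes "P = u + u" "Q = u * u"
  shows "lucas_seq P Q (Suc n) = of_nat (Suc n) * u ^ n"
proof (induction n rule: induct_nat_012)
  case (ge2 n)
  have "lucas_seq P Q (Suc (Suc (Suc n)))
      = (u + u) * (of_nat (Suc (Suc n)) * u ^ Suc n) - u * u * (of_nat (Suc n) * u ^ n)"
    using ge2 assms by simp
  also have "\<dots> = of_nat (Suc (Suc (Suc n))) * u ^ Suc (Suc n)"
    by (simp add: algebra_simps)
  finally show ?case .
qed (simp_all add: assms)

lemma lucas_seq_roots_eq_0_iff:
  fixes u v :: "'a::{idom,ring_char_0}"
  assumes "u \<noteq> 0"
  shows "lucas_seq (u + v) (u * v) n = 0 \<longleftrightarrow> n = 0 \<or> u \<noteq> v \<and> u ^ n = v ^ n"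
proof (cases "u = v")
  case True
  have "lucas_seq (u + v) (u * v) (Suc m) \<noteq> 0" for m
    using lucas_seq_double_root[of "u + v" u "u * v" m] True assms
    by (simp only: of_nat_eq_0_iff mult_eq_0_iff power_eq_0_iff) simp
  then show ?thesis
    using True by (cases n) auto
next
  case False
  then show ?thesis
    using lucas_seq_roots_mult_diff[of "u + v" u v "u * v" n] by (cases n) auto
qed

lemma least_power_eq_dvd:
  fixes u v :: "'a::idom"
  assumes "u \<noteq> 0" "u ^ d = v ^ d"
  shows "(LEAST h. h > 0 \<and> u ^ h = v ^ h) dvd d"
proof (cases "d = 0")
  case False
  define h where "h = (LEAST h. h > 0 \<and> u ^ h = v ^ h)"
  have "h > 0" "u ^ h = v ^ h"
    using LeastI[of "\<lambda>h. h > 0 \<and> u ^ h = v ^ h" d] False assms(2) by (simp_all add: h_def)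
  have "u ^ (d mod h) * (u ^ h) ^ (d div h) = v ^ (d mod h) * (u ^ h) ^ (d div h)"
    using assms(2) \<open>u ^ h = v ^ h\<close>
    by (metis mod_mult_div_eq power_add power_mult)
  then have "u ^ (d mod h) = v ^ (d mod h)"
    using assms(1) by simp
  moreover have "d mod h < h"
    using \<open>h > 0\<close> by simp
  ultimately have "d mod h = 0"
    using not_less_Least[of "d mod h" "\<lambda>h. h > 0 \<and> u ^ h = v ^ h"] by (auto simp: h_def)
  then show ?thesis
    by (simp add: h_def mod_eq_0_iff_dvd)
qed simp

lemma lucas_seq_roots_eq_0_imp_least_dvd:
  fixes u v :: "'a::{idom,ring_char_0}"
  assumes "u \<noteq> 0" and "lucas_seq (u + v) (u * v) d = 0"
  shows "(LEAST h. h > 0 \<and> lucas_seq (u + v) (u * v) h = 0) dvd d"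
proof (cases "d = 0")
  case False
  then have "u \<noteq> v" and "u ^ d = v ^ d"
    using assms(2) unfolding lucas_seq_roots_eq_0_iff[OF assms(1)] by simp_all
  then have "(\<lambda>h. h > 0 \<and> lucas_seq (u + v) (u * v) h = 0) = (\<lambda>h. h > 0 \<and> u ^ h = v ^ h)"
    unfolding lucas_seq_roots_eq_0_iff[OF assms(1)] by auto
  then show ?thesis
    using least_power_eq_dvd[OF assms(1) \<open>u ^ d = v ^ d\<close>] by simp
qed simp

(* An abbreviation, so that it matches the matrices written out in lemma3. *)
abbreviation rows2 :: "'a^'n \<Rightarrow> 'a^'n \<Rightarrow> 'a^'n^2" where
  "rows2 x y \<equiv> \<chi> i. if i = 1 then x else y"

lemma det_rows2: "det (rows2 x y) = x$1 * y$2 - x$2 * y$1"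
  by (simp add: det_2)

lemma det_rows2_swap: "det (rows2 x y) = - det (rows2 y x)"
  by (simp add: det_rows2)

lemma rank_eq_2_iff_det: "rank (M::real^2^2) = 2 \<longleftrightarrow> det M \<noteq> 0"
  using det_eq_0_rank[of M] rank_bound[of M] by auto

lemma rows2_vector_matrix_mult: "rows2 (x v* M) (y v* M) = rows2 x y ** M"
  by (simp add: vec_eq_iff forall_2 matrix_matrix_mult_def vector_matrix_mult_def)

lemma matpow_add: "matpow A (m + n) = matpow A m ** matpow A n"
  by (induction n) (simp_all add: matrix_mul_assoc)

lemma det_matpow: "det (matpow A n) = det A ^ n"
  by (induction n) (simp_all add: det_mul)

lemma cayley_hamilton_2: "(A::real^2^2) ** A = trace A *\<^sub>R A - det A *\<^sub>R mat 1"
  by (simp add: vec_eq_iff forall_2 matrix_matrix_mult_def sum_2 mat_def det_2 trace_def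
      algebra_simps)

lemma matpow_Suc_lucas_seq:
  fixes A :: "real^2^2"
  defines "L \<equiv> lucas_seq (trace A) (det A)"
  shows "matpow A (Suc n) = L (Suc n) *\<^sub>R A - (det A * L n) *\<^sub>R mat 1"
proof (induction n)
  case (Suc n)
  have "matpow A (Suc (Suc n)) = (L (Suc n) *\<^sub>R A - (det A * L n) *\<^sub>R mat 1) ** A"
    using Suc by simp
  also have "\<dots> = L (Suc n) *\<^sub>R (A ** A) - (det A * L n) *\<^sub>R A"
    by (simp add: vec_eq_iff forall_2 matrix_matrix_mult_def sum_2 mat_def algebra_simps)
  also have "\<dots> = L (Suc (Suc n)) *\<^sub>R A - (det A * L (Suc n)) *\<^sub>R mat 1"
    by (simp add: cayley_hamilton_2 L_def algebra_simps)
  finally show ?case .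
qed (simp add: L_def)

lemma det_rows2_self_matpow:
  fixes A :: "real^2^2"
  shows "det (rows2 C (C v* matpow A d)) = lucas_seq (trace A) (det A) d * det (rows2 C (C v* A))"
proof (cases d)
  case (Suc n)
  have row: "C v* matpow A d = lucas_seq (trace A) (det A) d *\<^sub>R (C v* A)
      - (det A * lucas_seq (trace A) (det A) n) *\<^sub>R C"
    unfolding Suc matpow_Suc_lucas_seq
    by (simp add: vec_eq_iff forall_2 vector_matrix_mult_def sum_2 mat_def algebra_simps)
  show ?thesis
    unfolding det_rows2 row by (simp add: algebra_simps)
qed (simp add: det_rows2)

lemma det_rows2_matpow:
  fixes A :: "real^2^2"
  assumes "t1 \<le> t2"
  shows "det (rows2 (C v* matpow A t1) (C v* matpow A t2))
    = lucas_seq (trace A) (det A) (t2 - t1) * det (rows2 C (C v* A)) * det A ^ t1"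
proof -
  have "C v* matpow A t2 = (C v* matpow A (t2 - t1)) v* matpow A t1"
    using assms by (simp add: vector_matrix_mul_assoc flip: matpow_add)
  moreover have "C v* matpow A t1 = C v* mat 1 v* matpow A t1"
    by simp
  ultimately show ?thesis
    by (simp only: rows2_vector_matrix_mult det_mul det_matpow vector_matrix_mul_rid
        det_rows2_self_matpow)
qed

lemma is_eigenvalue_iff_det:
  fixes A :: "real^'n^'n"
  shows "is_eigenvalue A l \<longleftrightarrow> det (cmat A - mat l) = 0"
proof -
  let ?M = "cmat A - mat l"
  have "mat l *v v = l *s v" for v :: "complex^'n"
    by (simp add: vec_eq_iff matrix_vector_mult_def mat_def if_distrib if_distribR
        cong del: if_weak_cong)
  then have shift: "cmat A *v v = l *s v \<longleftrightarrow> ?M *v v = 0" for v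
    by (simp add: matrix_vector_mult_diff_rdistrib)
  have "det ?M \<noteq> 0 \<longleftrightarrow> inj ((*v) ?M)"
    using det_nz_iff_inj_gen[of "(*v) ?M"] by simp
  also have "\<dots> \<longleftrightarrow> (\<forall>v. ?M *v v = 0 \<longrightarrow> v = 0)"
  proof
    assume "inj ((*v) ?M)"
    then show "\<forall>v. ?M *v v = 0 \<longrightarrow> v = 0"
      by (metis injD matrix_vector_mult_0_right)
  next
    assume "\<forall>v. ?M *v v = 0 \<longrightarrow> v = 0"
    then show "inj ((*v) ?M)"
      by (intro injI) (metis matrix_vector_mult_diff_distrib right_minus_eq)
  qed
  finally show ?thesis
    unfolding is_eigenvalue_def shift by blast
qed

lemma complex_quadratic_roots:
  fixes b c :: complex
  shows "\<exists>z1 z2. z1 + z2 = b \<and> z1 * z2 = c"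
proof -
  define s where "s = csqrt (b\<^sup>2 - 4 * c)"
  have "(b + s) / 2 + (b - s) / 2 = b" and "(b + s) / 2 * ((b - s) / 2) = c"
    by (simp_all add: s_def field_simps power2_eq_square[symmetric])
  then show ?thesis
    by blast
qed

lemma eigenvalues_2:
  fixes A :: "real^2^2"
  obtains z1 z2 where "\<And>l. is_eigenvalue A l \<longleftrightarrow> l = z1 \<or> l = z2"
    and "of_real (trace A) = z1 + z2" and "of_real (det A) = z1 * z2"
proof -
  obtain z1 z2 :: complex
    where sum: "z1 + z2 = of_real (trace A)" and prod: "z1 * z2 = of_real (det A)"
    using complex_quadratic_roots by blast
  have charpoly: "det (cmat A - mat l) = l\<^sup>2 - of_real (trace A) * l + of_real (det A)" for l
    by (simp add: det_2 cmat_def mat_def trace_def sum_2 algebra_simps power2_eq_square)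
  have factor: "l\<^sup>2 - of_real (trace A) * l + of_real (det A) = (l - z1) * (l - z2)" for l
    unfolding sum[symmetric] prod[symmetric] by (simp add: algebra_simps power2_eq_square)
  have "is_eigenvalue A l \<longleftrightarrow> l = z1 \<or> l = z2" for l
    by (simp add: is_eigenvalue_iff_det charpoly factor)
  then show ?thesis
    using that sum prod by simp
qed

lemma card_le_of_mod_eq:
  fixes S :: "nat set"
  assumes "S \<subseteq> {t..<t + T}" and "\<And>s1 s2. s1 \<in> S \<Longrightarrow> s2 \<in> S \<Longrightarrow> s1 mod h = s2 mod h"
  shows "card S \<le> (T - 1) div h + 1"
proof (cases "S = {}")
  case False
  define m where "m = Min S"
  have "finite S"
    using assms(1) finite_subset by blast
  then have "m \<in> S" and m_le: "\<And>s. s \<in> S \<Longrightarrow> m \<le> s"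
    using False by (simp_all add: m_def)
  have multiple: "(s - m) div h * h = s - m" if "s \<in> S" for s
    using assms(2)[OF that \<open>m \<in> S\<close>] m_le[OF that] by (simp add: mod_eq_dvd_iff_nat)
  have bound: "s - m \<le> T - 1" if "s \<in> S" for s
    using subsetD[OF assms(1) that] subsetD[OF assms(1) \<open>m \<in> S\<close>] by (simp; linarith)
  have "inj_on (\<lambda>s. (s - m) div h) S"
    by (rule inj_onI) (metis multiple m_le le_add_diff_inverse2)
  moreover have "(\<lambda>s. (s - m) div h) ` S \<subseteq> {..(T - 1) div h}"
    using bound by (auto intro!: div_le_mono)
  ultimately show ?thesis
    using card_inj_on_le[of _ S "{..(T - 1) div h}"] by fastforce
qed simp

lemma exists_pair_diff_not_dvd:
  fixes S :: "nat set"
  assumes "S \<subseteq> {t..<t + T}" and "h > 0" and "1 + real T / real h \<le> real (card S)"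
  shows "\<exists>s1\<in>S. \<exists>s2\<in>S. s1 < s2 \<and> \<not> h dvd s2 - s1"
proof (rule ccontr)
  assume "\<not> ?thesis"
  then have "s1 mod h = s2 mod h" if "s1 \<in> S" "s2 \<in> S" "s1 \<le> s2" for s1 s2
    using that mod_eq_dvd_iff_nat[of s1 s2 h] by (cases "s1 = s2") auto
  then have "s1 mod h = s2 mod h" if "s1 \<in> S" "s2 \<in> S" for s1 s2
    using that by (metis nat_le_linear)
  then have card: "card S \<le> (T - 1) div h + 1"
    using card_le_of_mod_eq[OF assms(1)] by blast
  have "T > 0"
    using assms(1,3) by (cases "T = 0") auto
  have "real ((T - 1) div h * h) \<le> real (T - 1)"
    by (simp only: of_nat_le_iff div_times_less_eq_dividend)
  then have "real ((T - 1) div h) * real h \<le> real T - 1"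
    using \<open>T > 0\<close> by (simp add: of_nat_diff)
  then have "real ((T - 1) div h) < real T / real h"
    using assms(2) by (simp add: pos_less_divide_eq)
  then show False
    using card assms(3) by linarith
qed

lemma dim_eq_2_of_det_rows2:
  fixes X :: "(real^2) set"
  assumes "x \<in> X" and "y \<in> X" and "det (rows2 x y) \<noteq> 0"
  shows "dim X = 2"
proof -
  have "rows (rows2 x y) = {row 1 (rows2 x y), row 2 (rows2 x y)}"
    unfolding rows_def UNIV_2 by blast
  then have "rows (rows2 x y) = {x, y}"
    by (simp add: row_def)
  then have "dim {x, y} = 2"
    using assms(3) by (simp add: rank_eq_2_iff_det[symmetric] row_rank_def)
  moreover have "dim {x, y} \<le> dim X"
    using assms(1,2) by (simp add: dim_subset)
  moreover have "dim X \<le> 2"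
    using dim_subset_UNIV_cart[of X] by simp
  ultimately show ?thesis
    by linarith
qed

lemma lucas_seq_eq_0_iff_of_real:
  "lucas_seq P Q d = 0 \<longleftrightarrow> lucas_seq (of_real P) (of_real Q) d = (0::'a::{real_algebra_1,comm_ring_1})"
  by (metis of_real_eq_0_iff of_real_lucas_seq)

lemma det_ne_0_if_eigenvalues_ne_0:
  fixes A :: "real^2^2"
  assumes "\<And>l. is_eigenvalue A l \<Longrightarrow> l \<noteq> 0"
  shows "det A \<noteq> 0"
proof -
  obtain z1 z2 where "\<And>l. is_eigenvalue A l \<longleftrightarrow> l = z1 \<or> l = z2"
    and "of_real (det A) = z1 * z2"
    using eigenvalues_2[of A] by blast
  then show ?thesis
    using assms by (metis mult_eq_0_iff of_real_0)
qed

lemma eigenvalue_collision_iff_lucas_seq: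
  fixes A :: "real^2^2"
  assumes "\<And>l. is_eigenvalue A l \<Longrightarrow> l \<noteq> 0" and "h > 0"
  shows "(\<exists>l1 l2. is_eigenvalue A l1 \<and> is_eigenvalue A l2 \<and> l1 \<noteq> l2 \<and> l1 ^ h = l2 ^ h)
    \<longleftrightarrow> lucas_seq (trace A) (det A) h = 0"
proof -
  obtain z1 z2 where eig: "\<And>l. is_eigenvalue A l \<longleftrightarrow> l = z1 \<or> l = z2"
    and tr: "of_real (trace A) = z1 + z2" and de: "of_real (det A) = z1 * z2"
    using eigenvalues_2[of A] by blast
  have "z1 \<noteq> 0"
    using assms(1) eig by blast
  show ?thesis
    unfolding eig lucas_seq_eq_0_iff_of_real[where 'a = complex] tr de
      lucas_seq_roots_eq_0_iff[OF \<open>z1 \<noteq> 0\<close>]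
    using assms(2) by auto
qed

lemma least_lucas_seq_trace_det_dvd:
  fixes A :: "real^2^2"
  assumes "\<And>l. is_eigenvalue A l \<Longrightarrow> l \<noteq> 0" and "lucas_seq (trace A) (det A) d = 0"
  shows "(LEAST h. h > 0 \<and> lucas_seq (trace A) (det A) h = 0) dvd d"
proof -
  obtain z1 z2 where eig: "\<And>l. is_eigenvalue A l \<longleftrightarrow> l = z1 \<or> l = z2"
    and tr: "of_real (trace A) = z1 + z2" and de: "of_real (det A) = z1 * z2"
    using eigenvalues_2[of A] by blast
  have "z1 \<noteq> 0"
    using assms(1) eig by blast
  then show ?thesis
    using lucas_seq_roots_eq_0_imp_least_dvd[of z1 z2 d] assms(2)
    unfolding lucas_seq_eq_0_iff_of_real[where 'a = complex] tr de by blast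
qed

lemma det_rows2_matpow_ne_0_iff:
  fixes A :: "real^2^2"
  assumes "observable2 A C" and "det A \<noteq> 0" and "t1 < t2"
  shows "det (rows2 (C v* matpow A t1) (C v* matpow A t2)) \<noteq> 0
    \<longleftrightarrow> lucas_seq (trace A) (det A) (t2 - t1) \<noteq> 0"
  using assms det_rows2_matpow[of t1 t2 C A]
  by (simp add: observable2_def rank_eq_2_iff_det)

lemma rank_rows2_matpow_eq_2:
  fixes A :: "real^2^2"
  assumes "observable2 A C" and "det A \<noteq> 0" and "t1 \<noteq> t2"
    and "\<And>h. h > 0 \<Longrightarrow> lucas_seq (trace A) (det A) h \<noteq> 0"
  shows "rank (rows2 (C v* matpow A t1) (C v* matpow A t2)) = 2"
proof -
  have "det (rows2 (C v* matpow A s1) (C v* matpow A s2)) \<noteq> 0" if "s1 < s2" for s1 s2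
    using det_rows2_matpow_ne_0_iff[OF assms(1,2) that] assms(4)[of "s2 - s1"] that by simp
  then show ?thesis
    using assms(3) det_rows2_swap[of "C v* matpow A t1" "C v* matpow A t2"]
    by (cases t1 t2 rule: linorder_cases) (auto simp: rank_eq_2_iff_det)
qed

lemma sample_obs_rank_eq_2:
  fixes A :: "real^2^2"
  assumes "observable2 A C" and "det A \<noteq> 0"
    and "S \<subseteq> {t..<t + T}" and "h > 0" and "1 + real T / real h \<le> real (card S)"
    and "\<And>d. lucas_seq (trace A) (det A) d = 0 \<Longrightarrow> h dvd d"
  shows "sample_obs_rank A C S = 2"
proof -
  obtain t1 t2 where "t1 \<in> S" "t2 \<in> S" "t1 < t2" "\<not> h dvd t2 - t1"
    using exists_pair_diff_not_dvd[OF assms(3-5)] by blast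
  then have "det (rows2 (C v* matpow A t1) (C v* matpow A t2)) \<noteq> 0"
    using det_rows2_matpow_ne_0_iff[OF assms(1,2)] assms(6) by blast
  then show ?thesis
    unfolding sample_obs_rank_def dim_span
    using \<open>t1 \<in> S\<close> \<open>t2 \<in> S\<close> by (intro dim_eq_2_of_det_rows2) auto
qed

theorem lemma3:
  fixes A :: "real^2^2" and C :: "real^2"
  assumes obs: "observable2 A C"
    and nz: "\<And>l. is_eigenvalue A l \<Longrightarrow> l \<noteq> 0"
  shows
   "(\<not> (\<exists>h::nat. h > 0 \<and> (\<exists>l1 l2. is_eigenvalue A l1 \<and> is_eigenvalue A l2 \<and> l1 \<noteq> l2 \<and> l1 ^ h = l2 ^ h))
      \<longrightarrow> (\<forall>t1 t2::nat. t1 \<noteq> t2 \<longrightarrow>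
             rank (\<chi> i::2. if i = 1 then C v* matpow A t1 else C v* matpow A t2) = 2))
    \<and>
    ((\<exists>h::nat. h > 0 \<and> (\<exists>l1 l2. is_eigenvalue A l1 \<and> is_eigenvalue A l2 \<and> l1 \<noteq> l2 \<and> l1 ^ h = l2 ^ h))
      \<longrightarrow> (let hbar = (LEAST h::nat. h > 0 \<and> (\<exists>l1 l2. is_eigenvalue A l1 \<and> is_eigenvalue A l2 \<and> l1 \<noteq> l2 \<and> l1 ^ h = l2 ^ h))
           in \<forall>(t::nat) (T::nat) (S::nat set). T > 0 \<longrightarrow> S \<subseteq> {t..t+T-1} \<longrightarrow>
                 real (card S) \<ge> 1 + real T / real hbar \<longrightarrow> sample_obs_rank A C S = 2))"
proof -
  let ?L = "lucas_seq (trace A) (det A)"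
  have "det A \<noteq> 0"
    using nz by (rule det_ne_0_if_eigenvalues_ne_0)
  have collision:
    "h > 0 \<and> (\<exists>l1 l2. is_eigenvalue A l1 \<and> is_eigenvalue A l2 \<and> l1 \<noteq> l2 \<and> l1 ^ h = l2 ^ h)
      \<longleftrightarrow> h > 0 \<and> ?L h = 0" for h
    using eigenvalue_collision_iff_lucas_seq[OF nz] by blast
  show ?thesis
    unfolding collision Let_def
  proof (intro conjI impI allI)
    fix t1 t2 :: nat
    assume "\<not> (\<exists>h. h > 0 \<and> ?L h = 0)" and "t1 \<noteq> t2"
    then show "rank (rows2 (C v* matpow A t1) (C v* matpow A t2)) = 2"
      by (intro rank_rows2_matpow_eq_2[OF obs \<open>det A \<noteq> 0\<close>]) blast+
  next
    fix t T :: nat and S :: "nat set"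
    define hbar where "hbar = (LEAST h. h > 0 \<and> ?L h = 0)"
    assume "\<exists>h. h > 0 \<and> ?L h = 0" and "T > 0" and "S \<subseteq> {t..t + T - 1}"
      and "1 + real T / real hbar \<le> real (card S)"
    moreover have "hbar > 0"
      unfolding hbar_def using LeastI_ex[OF \<open>\<exists>h. h > 0 \<and> ?L h = 0\<close>] by blast
    moreover have "{t..t + T - 1} = {t..<t + T}"
      using \<open>T > 0\<close> by auto
    ultimately show "sample_obs_rank A C S = 2"
      using least_lucas_seq_trace_det_dvd[OF nz] unfolding hbar_def
      by (intro sample_obs_rank_eq_2[OF obs \<open>det A \<noteq> 0\<close>]) auto
  qed
qed

end
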